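(* Let $d\ge2$, $D_d=\bigl(\binom{d-j}{d-i}\bigr)_{1\le i,j\le d}$ (with $\binom{r}{s}=0$ for $s<0$ or $s>r$), and let $j$ be an even integer with $2\le j\le d$. Let $D'_d(j)$ be the $j\times j$ submatrix of $D_d$ formed by its first $j$ columns and by rows $1,\dots,\frac j2$ and $d-\frac j2+1,\dots,d$. Then $\det D'_d(j)=1$, so $D'_d(j)^{-1}\in M_{j\times j}(\mathbb Z)$, and the entry of $D'_d(j)^{-1}$ in row $j$ and column $\frac j2$ equals $\pm1$.
   Context: Standard binomial coefficients, with the convention $\binom{r}{s}=0$ for $s<0$ or $s>r$. *)

theory Defs
  imports "Jordan_Normal_Form.Determinant"
begin

text \<open>Isabelle matrices are 0-indexed: entry (i,k) here is the paper's entry (i+1,k+1).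
  Since 1 <= i,k <= d, both d-k and d-i are nonnegative, and nat choose gives 0
  when d-i > d-k, matching the convention.\<close>
definition D_mat :: "nat \<Rightarrow> int mat" where
  "D_mat d = mat d d (\<lambda>(i,k). int ((d - (k+1)) choose (d - (i+1))))"

text \<open>Row map for D'_d(j): 0-indexed row r < j/2 is paper row r+1; row r >= j/2 is
  paper row d - j + r + 1 (so rows d-j/2+1,...,d). Returned 0-indexed.\<close>
definition D'_row :: "nat \<Rightarrow> nat \<Rightarrow> nat \<Rightarrow> nat" where
  "D'_row d j r = (if r < j div 2 then r else d - j + r)"

definition D'_mat :: "nat \<Rightarrow> nat \<Rightarrow> int mat" where
  "D'_mat d j = mat j j (\<lambda>(r,c). D_mat d $$ (D'_row d j r, c))"

end

theory Submission
  imports Defs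
begin

text \<open>Write \<open>j = 2m\<close> and \<open>n = d - j\<close>. The first \<open>m\<close> rows of \<open>D'_d(j)\<close> form a unit lower
  triangular block followed by zeros, so the determinant equals that of the lower right
  \<open>m \<times> m\<close> block, which is the binomial matrix \<open>(binom (n + m - 1 - c) (m - 1 - r))\<close>.
  By Vandermonde's identity such a matrix factors as an upper unitriangular Toeplitz
  matrix of binomials \<open>binom n (t - r)\<close> times the lower unitriangular matrix obtained for
  \<open>n = 0\<close>, hence has determinant 1. Deleting row \<open>m\<close> and column \<open>j\<close> leaves a matrix of the
  same shape with \<open>n\<close> replaced by \<open>n + 1\<close>, so the cofactor giving the required entry of the
  inverse (the adjugate) is \<open>\<plusminus>1\<close>.\<close>

lemma sum_if_le_shift:
  fixes g :: "nat \<Rightarrow> 'a::comm_monoid_add"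
  assumes "r \<le> m"
  shows "(\<Sum>t<m. if r \<le> t then g t else 0) = (\<Sum>s<m-r. g (r+s))"
proof -
  have "{..<m} \<inter> {t. r \<le> t} = {r..<m}"
    by auto
  then have "(\<Sum>t<m. if r \<le> t then g t else 0) = (\<Sum>t\<in>{r..<m}. g t)"
    by (simp add: sum.If_cases Collect_conv_if)
  also have "\<dots> = (\<Sum>s<m-r. g (r+s))"
    by (simp add: sum.atLeastLessThan_shift_0[of g r m] lessThan_atLeast0 comp_def)
  finally show ?thesis .
qed

lemma prod_list_diag_mat_eq_1:
  assumes "\<And>i. i < dim_row A \<Longrightarrow> A $$ (i,i) = 1"
  shows "prod_list (diag_mat A) = 1"
proof -
  have "diag_mat A = map (\<lambda>i. 1) [0..<dim_row A]"
    unfolding diag_mat_def by (rule map_cong) (auto simp: assms)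
  then show ?thesis by (simp add: map_replicate_const)
qed

definition binom_mat :: "nat \<Rightarrow> nat \<Rightarrow> int mat" where
  "binom_mat N m = mat m m (\<lambda>(r,c). int ((N + (m-1-c)) choose (m-1-r)))"

definition binom_toeplitz_mat :: "nat \<Rightarrow> nat \<Rightarrow> int mat" where
  "binom_toeplitz_mat N m = mat m m (\<lambda>(r,t). if r \<le> t then int (N choose (t-r)) else 0)"

lemma binom_mat_dim [simp]:
  "dim_row (binom_mat N m) = m" "dim_col (binom_mat N m) = m"
  "dim_row (binom_toeplitz_mat N m) = m" "dim_col (binom_toeplitz_mat N m) = m"
  by (simp_all add: binom_mat_def binom_toeplitz_mat_def)

lemma binom_mat_eq_toeplitz_mult:
  "binom_mat N m = binom_toeplitz_mat N m * binom_mat 0 m"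
proof (rule eq_matI)
  fix r c assume "r < dim_row (binom_toeplitz_mat N m * binom_mat 0 m)"
    and "c < dim_col (binom_toeplitz_mat N m * binom_mat 0 m)"
  then have r: "r < m" and c: "c < m" by auto
  have "(binom_toeplitz_mat N m * binom_mat 0 m) $$ (r,c) =
      (\<Sum>t<m. if r \<le> t then int ((N choose (t-r)) * ((m-1-c) choose (m-1-t))) else 0)"
    using r c unfolding binom_toeplitz_mat_def binom_mat_def
    by (auto simp: scalar_prod_def lessThan_atLeast0 intro!: sum.cong)
  also have "\<dots> = (\<Sum>s\<le>m-1-r. int ((N choose s) * ((m-1-c) choose (m-1-r-s))))"
    using r by (subst sum_if_le_shift) (auto simp: diff_diff_add intro!: sum.cong)
  also have "\<dots> = int ((N + (m-1-c)) choose (m-1-r))"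
    by (simp only: of_nat_sum[symmetric] vandermonde)
  finally show "binom_mat N m $$ (r,c) = (binom_toeplitz_mat N m * binom_mat 0 m) $$ (r,c)"
    using r c by (simp add: binom_mat_def)
qed (simp_all add: binom_mat_def)

lemma det_binom_mat: "det (binom_mat N m) = 1"
proof -
  have "det (binom_toeplitz_mat N m) = 1"
    by (subst det_upper_triangular[of _ m])
      (auto simp: upper_triangular_def binom_toeplitz_mat_def intro!: prod_list_diag_mat_eq_1)
  moreover have "det (binom_mat 0 m) = 1"
    by (subst det_lower_triangular[of m])
      (auto simp: binom_mat_def intro!: prod_list_diag_mat_eq_1)
  ultimately show ?thesis
    by (subst binom_mat_eq_toeplitz_mult) (simp add: det_mult[of _ m] carrier_matI)
qed

lemma det_eq_det_lower_right_block:
  fixes X :: "'a::idom mat"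
  assumes X: "X \<in> carrier_mat (k+l) (k+l)"
    and upper_zero: "\<And>i c. i < k \<Longrightarrow> c < k+l \<Longrightarrow> i < c \<Longrightarrow> X $$ (i,c) = 0"
    and diag_one: "\<And>i. i < k \<Longrightarrow> X $$ (i,i) = 1"
  shows "det X = det (mat l l (\<lambda>(r,c). X $$ (k+r, k+c)))"
proof -
  define A1 where "A1 = mat k k (\<lambda>(i,c). X $$ (i,c))"
  define A3 where "A3 = mat l k (\<lambda>(i,c). X $$ (k+i,c))"
  define A4 where "A4 = mat l l (\<lambda>(r,c). X $$ (k+r, k+c))"
  have blocks: "X = four_block_mat A1 (0\<^sub>m k l) A3 A4"
    using X by (intro eq_matI) (auto simp: A1_def A3_def A4_def index_mat_four_block upper_zero)
  have "det X = det A1 * det A4"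
    unfolding blocks by (rule det_four_block_mat_upper_right_zero) (auto simp: A1_def A3_def A4_def)
  moreover have "det A1 = 1"
    by (subst det_lower_triangular[of k])
      (auto simp: A1_def upper_zero diag_one intro!: prod_list_diag_mat_eq_1)
  ultimately show ?thesis by (simp add: A4_def)
qed

lemma D'_mat_carrier: "D'_mat d j \<in> carrier_mat j j"
  by (simp add: D'_mat_def)

lemma D'_mat_upper_rows:
  assumes "j = m + m" "r < m" "c < j" "j \<le> d"
  shows "D'_mat d j $$ (r,c) = int ((d - Suc c) choose (d - Suc r))"
  using assms unfolding D'_mat_def D_mat_def D'_row_def by auto

lemma D'_mat_lower_rows:
  assumes "j = m + m" "m \<le> r" "r < j" "c < j" "j \<le> d"
  shows "D'_mat d j $$ (r, c) = int ((d - Suc c) choose (j - Suc r))"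
  using assms unfolding D'_mat_def D_mat_def D'_row_def by auto

lemma det_D'_mat:
  assumes "even j" "j \<le> d"
  shows "det (D'_mat d j) = 1"
proof -
  define m where "m = j div 2"
  have j: "j = m + m"
    using assms unfolding m_def by presburger
  have "det (D'_mat d j) = det (mat m m (\<lambda>(r,c). D'_mat d j $$ (m+r, m+c)))"
    using D'_mat_carrier[of d j] assms
    by (intro det_eq_det_lower_right_block) (auto simp: j D'_mat_upper_rows)
  also have "mat m m (\<lambda>(r,c). D'_mat d j $$ (m+r, m+c)) = binom_mat (d - j) m"
    using assms by (intro eq_matI) (auto simp: binom_mat_def D'_mat_lower_rows j add.commute)
  finally show ?thesis
    by (simp add: det_binom_mat)
qed

lemma det_D'_mat_delete:
  assumes "even j" "2 \<le> j" "j \<le> d"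
  shows "det (mat_delete (D'_mat d j) (j div 2 - 1) (j - 1)) = 1"
proof -
  define m where "m = j div 2"
  define Y where "Y = mat_delete (D'_mat d j) (m - 1) (j - 1)"
  have j: "j = m + m" and m: "1 \<le> m"
    using assms unfolding m_def by presburger+
  have Y: "Y \<in> carrier_mat ((m-1) + m) ((m-1) + m)"
    using D'_mat_carrier[of d j] m j unfolding Y_def by auto
  have Y_index: "Y $$ (r,c) = D'_mat d j $$ (if r < m - 1 then r else Suc r, c)"
    if "r < j - 1" "c < j - 1" for r c
    using that D'_mat_carrier[of d j] unfolding Y_def mat_delete_def by auto
  have "det Y = det (mat m m (\<lambda>(r,c). Y $$ (m-1+r, m-1+c)))"
    using Y m j assms
    by (intro det_eq_det_lower_right_block) (auto simp: Y_index D'_mat_upper_rows)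
  also have "mat m m (\<lambda>(r,c). Y $$ (m-1+r, m-1+c)) = binom_mat (d - j + 1) m"
    using assms m by (intro eq_matI)
      (auto simp: Y_index binom_mat_def D'_mat_lower_rows j add.commute Suc_diff_Suc)
  finally show ?thesis
    by (simp add: Y_def m_def det_binom_mat)
qed

theorem corollary5p12:
  fixes d j :: nat
  assumes "d \<ge> 2" and "even j" and "2 \<le> j" and "j \<le> d"
  shows "det (D'_mat d j) = 1 \<and>
    (\<exists>B \<in> carrier_mat j j.
        D'_mat d j * B = 1\<^sub>m j \<and> B * D'_mat d j = 1\<^sub>m j \<and>
        B $$ (j - 1, j div 2 - 1) \<in> {1, -1})"
proof -
  let ?X = "D'_mat d j" and ?i = "j div 2 - 1"
  have det: "det ?X = 1"
    using assms by (simp add: det_D'_mat)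
  have "adj_mat ?X $$ (j - 1, ?i) = cofactor ?X ?i (j - 1)"
    using assms by (simp add: adj_mat_def D'_mat_def)
  also have "\<dots> = (-1) ^ (?i + (j - 1))"
    unfolding cofactor_def det_D'_mat_delete[OF assms(2-4)] by simp
  finally have "adj_mat ?X $$ (j - 1, ?i) \<in> {1, -1}"
    by (simp add: minus_one_power_iff)
  with det adj_mat[OF D'_mat_carrier, of d j] show ?thesis
    by (intro conjI bexI[of _ "adj_mat ?X"]) auto
qed

end
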